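(* In the single-period model described in the context, with short sales prohibitions (admissible strategies $h=(h_0,\dots,h_M)$ satisfy $h_0\in\mathbb{R}$ arbitrary and $h_m\ge 0$ for $m=1,\dots,M$), there is no arbitrage under model uncertainty if and only if there exists a probability measure $Q$ on $\Omega$ with $Q(\omega)>0$ for all $\omega\in\Omega$ and $E_Q[\Delta S_m^*]\le 0$ for all $m=1,\dots,M$.
   Context: Single-period model: $\Omega=\{\omega_1,\dots,\omega_K\}$ is a finite sample space with all subsets measurable. $\mathcal{P}$ is a nonempty family of probability measures on $\Omega$ with $\sup_{P\in\mathcal{P}}P(\omega)>0$ for every $\omega\in\Omega$. There is a bond with $S_0(0)=1$, $S_0(1)=1+r$, $r\ge 0$ a constant, and $M$ risky securities with known initial prices $S_m(0)>0$ and random terminal prices $S_m(1):\Omega\to\mathbb{R}$, $m=1,\dots,M$. Discounted prices: $S_m^*(t)=S_m(t)/S_0(t)$, $t=0,1$, and $\Delta S_m^*=S_m^*(1)-S_m^*(0)$. For a trading strategy $h=(h_0,\dots,h_M)$, the discounted portfolio value is $V_t^*=h_0+\sum_{m=1}^M h_m S_m^*(t)$, $t=0,1$. A trading strategy is an arbitrage under model uncertainty if (i) $V_0^*=0$ and (ii) $V_1^*(\omega)\ge 0$ for all $\omega\in\Omega$ and $\sup_{P\in\mathcal{P}}E_P[V_1^*]>0$. "No arbitrage under model uncertainty" means no admissible trading strategy is an arbitrage under model uncertainty. *)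

theory Defs
  imports Main "HOL-Library.Extended_Real" Complex_Main
begin

text \<open>Finite sample space: the universe of a finite type 'w (all subsets measurable).
A probability measure on it is given by its point masses.\<close>

definition prob_fun :: "('w::finite \<Rightarrow> real) \<Rightarrow> bool" where
  "prob_fun P \<longleftrightarrow> (\<forall>w. 0 \<le> P w) \<and> (\<Sum>w\<in>UNIV. P w) = 1"

definition expect :: "('w::finite \<Rightarrow> real) \<Rightarrow> ('w \<Rightarrow> real) \<Rightarrow> real" where
  "expect P X = (\<Sum>w\<in>UNIV. P w * X w)"

text \<open>Discounted prices: bond S_0(0)=1, S_0(1)=1+r; risky prices S0 m, S1 m w for m = 1..M.\<close>

definition disc_V0 :: "nat \<Rightarrow> (nat \<Rightarrow> real) \<Rightarrow> real \<Rightarrow> (nat \<Rightarrow> real) \<Rightarrow> real" where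
  "disc_V0 M S0 h0 h = h0 + (\<Sum>m=1..M. h m * S0 m)"

definition disc_V1 :: "nat \<Rightarrow> real \<Rightarrow> (nat \<Rightarrow> 'w \<Rightarrow> real) \<Rightarrow> real \<Rightarrow> (nat \<Rightarrow> real) \<Rightarrow> 'w \<Rightarrow> real" where
  "disc_V1 M r S1 h0 h w = h0 + (\<Sum>m=1..M. h m * (S1 m w / (1 + r)))"

definition delta_disc :: "real \<Rightarrow> (nat \<Rightarrow> real) \<Rightarrow> (nat \<Rightarrow> 'w \<Rightarrow> real) \<Rightarrow> nat \<Rightarrow> 'w \<Rightarrow> real" where
  "delta_disc r S0 S1 m w = S1 m w / (1 + r) - S0 m"

definition admissible_ns :: "nat \<Rightarrow> (nat \<Rightarrow> real) \<Rightarrow> bool" where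
  "admissible_ns M h \<longleftrightarrow> (\<forall>m\<in>{1..M}. 0 \<le> h m)"

definition arbitrage_mu ::
  "('w::finite \<Rightarrow> real) set \<Rightarrow> nat \<Rightarrow> real \<Rightarrow> (nat \<Rightarrow> real) \<Rightarrow> (nat \<Rightarrow> 'w \<Rightarrow> real)
     \<Rightarrow> real \<Rightarrow> (nat \<Rightarrow> real) \<Rightarrow> bool" where
  "arbitrage_mu Ps M r S0 S1 h0 h \<longleftrightarrow>
     disc_V0 M S0 h0 h = 0 \<and>
     (\<forall>w. 0 \<le> disc_V1 M r S1 h0 h w) \<and>
     (SUP P\<in>Ps. expect P (disc_V1 M r S1 h0 h)) > 0"

definition no_arbitrage_mu_ns ::
  "('w::finite \<Rightarrow> real) set \<Rightarrow> nat \<Rightarrow> real \<Rightarrow> (nat \<Rightarrow> real) \<Rightarrow> (nat \<Rightarrow> 'w \<Rightarrow> real) \<Rightarrow> bool" where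
  "no_arbitrage_mu_ns Ps M r S0 S1 \<longleftrightarrow>
     \<not> (\<exists>h0 h. admissible_ns M h \<and> arbitrage_mu Ps M r S0 S1 h0 h)"

end

(* With zero initial cost the discounted terminal value of a strategy is its gain
   \<Sum> h m * \<Delta>S*_m.  Since every state carries positive mass under some model, an
   arbitrage under model uncertainty is just a short-sale-free gain that is nonnegative and
   not identically zero.  So absence of arbitrage says that the cone generated by the
   increments \<Delta>S*_m meets the nonnegative orthant only in 0.  Separating this closed,
   finitely generated cone from the compact standard simplex (Stiemke's lemma) yields a
   strictly positive y with y \<bullet> \<Delta>S*_m \<le> 0, and normalising y gives Q.  Conversely, under
   such a Q every short-sale-free gain has nonpositive expectation, so a nonnegative one
   vanishes. *)

theory Submission
  imports Defs "HOL-Analysis.Analysis"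
begin

lemma convex_cone_hull_subset_nonneg_combinations:
  fixes c :: "'i \<Rightarrow> 'a::real_vector"
  assumes "finite I"
  shows "convex_cone hull (c ` I) \<subseteq> {\<Sum>i\<in>I. h i *\<^sub>R c i | h. \<forall>i\<in>I. 0 \<le> h i}"
    (is "_ \<subseteq> ?K")
proof (rule hull_minimal)
  show "c ` I \<subseteq> ?K"
  proof
    fix x assume "x \<in> c ` I"
    then obtain j where "j \<in> I" "x = c j" by blast
    have "(\<Sum>i\<in>I. (if i = j then 1 else 0) *\<^sub>R c i) = (\<Sum>i\<in>I. if i = j then c i else 0)"
      by (intro sum.cong) auto
    with assms \<open>j \<in> I\<close> \<open>x = c j\<close> have "x = (\<Sum>i\<in>I. (if i = j then 1 else 0) *\<^sub>R c i)"
      by simp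
    then show "x \<in> ?K" by force
  qed
  show "convex_cone ?K"
    unfolding convex_cone_iff
  proof (intro conjI ballI allI impI)
    show "0 \<in> ?K" by (force intro: exI[of _ "\<lambda>_. 0"])
  next
    fix x y assume "x \<in> ?K" "y \<in> ?K"
    then obtain h g where "x = (\<Sum>i\<in>I. h i *\<^sub>R c i)" "\<forall>i\<in>I. 0 \<le> h i"
      and "y = (\<Sum>i\<in>I. g i *\<^sub>R c i)" "\<forall>i\<in>I. 0 \<le> g i" by blast
    then have "x + y = (\<Sum>i\<in>I. (h i + g i) *\<^sub>R c i) \<and> (\<forall>i\<in>I. 0 \<le> h i + g i)"
      by (simp add: scaleR_add_left sum.distrib)
    then show "x + y \<in> ?K" by (auto intro!: exI[of _ "\<lambda>i. h i + g i"])
  next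
    fix x and t :: real assume "x \<in> ?K" "0 \<le> t"
    then obtain h where "x = (\<Sum>i\<in>I. h i *\<^sub>R c i)" "\<forall>i\<in>I. 0 \<le> h i" by blast
    with \<open>0 \<le> t\<close> have "t *\<^sub>R x = (\<Sum>i\<in>I. (t * h i) *\<^sub>R c i) \<and> (\<forall>i\<in>I. 0 \<le> t * h i)"
      by (simp add: scaleR_sum_right)
    then show "t *\<^sub>R x \<in> ?K" by (auto intro!: exI[of _ "\<lambda>i. t * h i"])
  qed
qed

lemma conic_inner_bounded_below_imp_nonneg:
  fixes a :: "'a::real_inner"
  assumes "conic C" "x \<in> C" and bound: "\<And>z. z \<in> C \<Longrightarrow> b < a \<bullet> z"
  shows "0 \<le> a \<bullet> x"
proof (rule ccontr)
  assume neg: "\<not> 0 \<le> a \<bullet> x"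
  have "0 \<in> C" using assms(1,2) conic_contains_0 by blast
  then have "b < 0" using bound by fastforce
  with neg have "(b / (a \<bullet> x)) *\<^sub>R x \<in> C"
    using assms(1,2) by (simp add: conic_def divide_nonpos_neg)
  with neg show False using bound by fastforce
qed

theorem stiemke_alternative:
  fixes c :: "'i \<Rightarrow> real^'n"
  assumes "finite I"
    and pointed: "\<And>x. x \<in> convex_cone hull (c ` I) \<Longrightarrow> \<forall>k. 0 \<le> x $ k \<Longrightarrow> x = 0"
  shows "\<exists>y. (\<forall>k. 0 < y $ k) \<and> (\<forall>i\<in>I. y \<bullet> c i \<le> 0)"
proof -
  define C where "C = convex_cone hull (c ` I)"
  define T :: "(real^'n) set" where "T = convex hull (range (\<lambda>k. axis k 1))"
  have "convex {x::real^'n. \<forall>k. 0 \<le> x $ k}"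
    by (rule convex_box_cart) (simp add: atLeast_def[symmetric])
  then have "T \<subseteq> {x. \<forall>k. 0 \<le> x $ k} \<inter> {x. 1 \<bullet> x = 1}"
    unfolding T_def
    by (intro hull_minimal convex_Int convex_hyperplane) (auto simp: inner_axis; simp add: axis_def)
  then have "T \<inter> C = {}"
    using pointed unfolding C_def by fastforce
  moreover have "compact T" "convex T" "T \<noteq> {}"
    unfolding T_def by (simp_all add: compact_convex_hull finite_imp_compact)
  moreover have "closed C" "convex C"
    unfolding C_def using assms(1) by (auto intro: closed_convex_cone_hull convex_convex_cone_hull)
  ultimately obtain a b where below: "\<And>x. x \<in> T \<Longrightarrow> a \<bullet> x < b"
    and above: "\<And>x. x \<in> C \<Longrightarrow> b < a \<bullet> x"
    using separating_hyperplane_compact_closed by meson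
  have "0 \<in> C" unfolding C_def by (rule convex_cone_hull_contains_0)
  then have "b < 0" using above by fastforce
  show ?thesis
  proof (intro exI conjI allI ballI)
    fix k
    have "axis k 1 \<in> T" unfolding T_def by (rule hull_inc) simp
    then show "0 < (- a) $ k" using below \<open>b < 0\<close> by (fastforce simp: inner_axis)
  next
    fix i assume "i \<in> I"
    then have "c i \<in> C" unfolding C_def by (simp add: hull_inc)
    then show "(- a) \<bullet> c i \<le> 0"
      using conic_inner_bounded_below_imp_nonneg[OF _ _ above] conic_convex_cone_hull
      unfolding C_def by fastforce
  qed
qed

lemma expect_lincomb:
  "expect Q (\<lambda>w. \<Sum>i\<in>I. h i * c i w) = (\<Sum>i\<in>I. h i * expect Q (c i))"
proof -
  have "expect Q (\<lambda>w. \<Sum>i\<in>I. h i * c i w) = (\<Sum>w\<in>UNIV. \<Sum>i\<in>I. h i * (Q w * c i w))"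
    unfolding expect_def by (simp add: sum_distrib_left mult.left_commute)
  also have "\<dots> = (\<Sum>i\<in>I. h i * expect Q (c i))"
    unfolding expect_def by (subst sum.swap) (simp add: sum_distrib_left)
  finally show ?thesis .
qed

lemma expect_nonpos_imp_zero:
  assumes "\<forall>w. 0 < Q w" "\<forall>w. 0 \<le> X w" "expect Q X \<le> 0"
  shows "X w = 0"
proof -
  have "(\<Sum>w\<in>UNIV. Q w * X w) = 0"
    using assms unfolding expect_def by (simp add: order_antisym sum_nonneg less_imp_le)
  then have "Q w * X w = 0"
    using assms(1,2) by (simp add: sum_nonneg_eq_0_iff less_imp_le)
  then show ?thesis using assms(1) by (simp add: less_imp_neq[symmetric])
qed

theorem exists_pos_prob_nonpos_expect_iff:
  fixes c :: "'i \<Rightarrow> 'w::finite \<Rightarrow> real"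
  assumes "finite I"
  shows "(\<exists>Q. prob_fun Q \<and> (\<forall>w. Q w > 0) \<and> (\<forall>i\<in>I. expect Q (c i) \<le> 0)) \<longleftrightarrow>
    (\<forall>h. (\<forall>i\<in>I. 0 \<le> h i) \<longrightarrow> (\<forall>w. 0 \<le> (\<Sum>i\<in>I. h i * c i w)) \<longrightarrow>
      (\<forall>w. (\<Sum>i\<in>I. h i * c i w) = 0))"
    (is "?prob \<longleftrightarrow> ?no_gain")
proof
  assume ?prob
  then obtain Q where Q: "\<forall>w. Q w > 0" "\<forall>i\<in>I. expect Q (c i) \<le> 0" by blast
  show ?no_gain
  proof (intro allI impI)
    fix h w
    assume h: "\<forall>i\<in>I. 0 \<le> h i" and gain: "\<forall>w. 0 \<le> (\<Sum>i\<in>I. h i * c i w)"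
    have "expect Q (\<lambda>w. \<Sum>i\<in>I. h i * c i w) \<le> 0"
      using h Q(2) by (simp add: expect_lincomb sum_nonpos mult_nonneg_nonpos)
    from expect_nonpos_imp_zero[OF Q(1) gain this]
    show "(\<Sum>i\<in>I. h i * c i w) = 0" .
  qed
next
  assume no_gain: ?no_gain
  define v where "v i = (\<chi> w. c i w)" for i
  have "x = 0" if cone: "x \<in> convex_cone hull (v ` I)" and nonneg: "\<forall>w. 0 \<le> x $ w" for x
  proof -
    obtain h where h: "\<forall>i\<in>I. 0 \<le> h i" "x = (\<Sum>i\<in>I. h i *\<^sub>R v i)"
      using subsetD[OF convex_cone_hull_subset_nonneg_combinations[OF assms] cone] by auto
    then have x: "x $ w = (\<Sum>i\<in>I. h i * c i w)" for w by (simp add: v_def)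
    then have "\<forall>w. 0 \<le> (\<Sum>i\<in>I. h i * c i w)" using nonneg by simp
    with no_gain h(1) have "\<forall>w. (\<Sum>i\<in>I. h i * c i w) = 0" by blast
    then show "x = 0" by (simp add: vec_eq_iff x)
  qed
  then obtain y where y: "\<forall>w. 0 < y $ w" "\<forall>i\<in>I. y \<bullet> v i \<le> 0"
    using stiemke_alternative[OF assms] by blast
  define s where "s = (\<Sum>w\<in>UNIV. y $ w)"
  have "s > 0" unfolding s_def using y(1) by (simp add: sum_pos)
  define Q where "Q w = y $ w / s" for w
  have "prob_fun Q"
    unfolding prob_fun_def Q_def using \<open>s > 0\<close> y(1)
    by (simp add: less_imp_le sum_divide_distrib[symmetric] s_def[symmetric])
  moreover have "\<forall>w. Q w > 0" unfolding Q_def using \<open>s > 0\<close> y(1) by simp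
  moreover have "expect Q (c i) = (y \<bullet> v i) / s" for i
    unfolding expect_def Q_def inner_vec_def v_def by (simp add: sum_divide_distrib)
  then have "\<forall>i\<in>I. expect Q (c i) \<le> 0"
    using y(2) \<open>s > 0\<close> by (simp add: divide_nonpos_pos)
  ultimately show ?prob by blast
qed

definition disc_gain ::
  "nat \<Rightarrow> real \<Rightarrow> (nat \<Rightarrow> real) \<Rightarrow> (nat \<Rightarrow> 'w \<Rightarrow> real) \<Rightarrow> (nat \<Rightarrow> real) \<Rightarrow> 'w \<Rightarrow> real" where
  "disc_gain M r S0 S1 h w = (\<Sum>m=1..M. h m * delta_disc r S0 S1 m w)"

lemma disc_V1_eq_disc_gain:
  assumes "disc_V0 M S0 h0 h = 0"
  shows "disc_V1 M r S1 h0 h = disc_gain M r S0 S1 h"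
proof
  fix w
  have "h0 = - (\<Sum>m=1..M. h m * S0 m)" using assms unfolding disc_V0_def by linarith
  then show "disc_V1 M r S1 h0 h w = disc_gain M r S0 S1 h w"
    unfolding disc_V1_def disc_gain_def delta_disc_def
    by (simp add: right_diff_distrib sum_subtractf)
qed

lemma prob_fun_le_1:
  assumes "prob_fun P"
  shows "P w \<le> 1"
proof -
  have "P w \<le> (\<Sum>u\<in>UNIV. P u)"
    using assms unfolding prob_fun_def by (intro member_le_sum) auto
  then show ?thesis using assms unfolding prob_fun_def by simp
qed

lemma bdd_above_expect:
  assumes "\<forall>P\<in>Ps. prob_fun P"
  shows "bdd_above ((\<lambda>P. expect P X) ` Ps)"
proof (rule bdd_aboveI2)
  fix P assume "P \<in> Ps"
  then have "P w * X w \<le> \<bar>X w\<bar>" for w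
    using assms prob_fun_le_1[of P w] unfolding prob_fun_def
    by (metis abs_ge_self abs_mult abs_of_nonneg mult_left_le_one_le abs_ge_zero order.trans)
  then show "expect P X \<le> (\<Sum>w\<in>UNIV. \<bar>X w\<bar>)"
    unfolding expect_def by (intro sum_mono)
qed

lemma SUP_expect_pos_iff:
  assumes "Ps \<noteq> {}" and probs: "\<forall>P\<in>Ps. prob_fun P"
    and charged: "\<forall>w. (SUP P\<in>Ps. P w) > 0" and nonneg: "\<forall>w. 0 \<le> X w"
  shows "(SUP P\<in>Ps. expect P X) > 0 \<longleftrightarrow> (\<exists>w. X w \<noteq> 0)"
proof
  assume pos: "(SUP P\<in>Ps. expect P X) > 0"
  show "\<exists>w. X w \<noteq> 0"
  proof (rule ccontr)
    assume "\<nexists>w. X w \<noteq> 0"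
    then have "(SUP P\<in>Ps. expect P X) = 0"
      using \<open>Ps \<noteq> {}\<close> by (simp add: expect_def)
    with pos show False by simp
  qed
next
  assume "\<exists>w. X w \<noteq> 0"
  then obtain w where "X w > 0" using nonneg by (metis less_eq_real_def)
  have "bdd_above ((\<lambda>P. P w) ` Ps)"
    using probs prob_fun_le_1 by (intro bdd_aboveI2[where M = 1]) auto
  then obtain P where P: "P \<in> Ps" "P w > 0"
    using charged less_cSUP_iff[OF \<open>Ps \<noteq> {}\<close>] by blast
  have "0 < P w * X w" using P(2) \<open>X w > 0\<close> by simp
  also have "\<dots> \<le> expect P X"
    unfolding expect_def using probs P(1) nonneg
    by (intro member_le_sum) (auto simp: prob_fun_def)
  finally show "(SUP P\<in>Ps. expect P X) > 0"
    using less_cSUP_iff[OF \<open>Ps \<noteq> {}\<close> bdd_above_expect[OF probs]] P(1) by blast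
qed

lemma no_arbitrage_mu_ns_iff:
  assumes "Ps \<noteq> {}" "\<forall>P\<in>Ps. prob_fun P" "\<forall>w. (SUP P\<in>Ps. P w) > 0"
  shows "no_arbitrage_mu_ns Ps M r S0 S1 \<longleftrightarrow>
    (\<forall>h. admissible_ns M h \<longrightarrow> (\<forall>w. 0 \<le> disc_gain M r S0 S1 h w) \<longrightarrow>
      (\<forall>w. disc_gain M r S0 S1 h w = 0))"
proof -
  have arbitrage_iff: "arbitrage_mu Ps M r S0 S1 h0 h \<longleftrightarrow> disc_V0 M S0 h0 h = 0 \<and>
      (\<forall>w. 0 \<le> disc_gain M r S0 S1 h w) \<and> (\<exists>w. disc_gain M r S0 S1 h w \<noteq> 0)" for h0 h
    unfolding arbitrage_mu_def
    using disc_V1_eq_disc_gain SUP_expect_pos_iff[OF assms] by metis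
  have "disc_V0 M S0 (- (\<Sum>m=1..M. h m * S0 m)) h = 0" for h
    by (simp add: disc_V0_def)
  then show ?thesis
    unfolding no_arbitrage_mu_ns_def arbitrage_iff by blast
qed

theorem mainTheorem2:
  fixes Ps :: "('w::finite \<Rightarrow> real) set"
    and M :: nat and r :: real
    and S0 :: "nat \<Rightarrow> real" and S1 :: "nat \<Rightarrow> 'w \<Rightarrow> real"
  assumes "Ps \<noteq> {}"
    and "\<forall>P\<in>Ps. prob_fun P"
    and "\<forall>w. (SUP P\<in>Ps. P w) > 0"
    and "r \<ge> 0"
    and "\<forall>m\<in>{1..M}. S0 m > 0"
  shows "no_arbitrage_mu_ns Ps M r S0 S1 \<longleftrightarrow>
    (\<exists>Q. prob_fun Q \<and> (\<forall>w. Q w > 0) \<and>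
         (\<forall>m\<in>{1..M}. expect Q (delta_disc r S0 S1 m) \<le> 0))"
  unfolding no_arbitrage_mu_ns_iff[OF assms(1-3)] admissible_ns_def disc_gain_def
  using exists_pos_prob_nonpos_expect_iff[of "{1..M}" "delta_disc r S0 S1"] by simp

end
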